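(* Let $N\in\mathbb N$ and, for $p>1$ and $x\in\mathbb R$, let \[\mathfrak h_{p,N}(x)=\sum_{n\in\mathbb Z,\ |x-n|>N}|\mathrm{sinc}(x-n)|^p .\] Then there exists $p_*$ such that $x=1/2$ is a local minimum point of $\mathfrak h_{p,N}$ if $p>p_*$ and a local maximum point of $\mathfrak h_{p,N}$ if $p<p_*$. The value $p_*$ is a solution of the equation \[4(p_*+1)\lambda(p_*+2;N)-\pi^2\lambda(p_*;N)=0,\] and it satisfies \[p_*\ge \frac18\Big(\pi^2(2N+1)^2-12+\sqrt{(\pi^2(2N+1)^2-12)^2-128}\Big),\] \[p_*\le \frac14\sqrt{72\pi^2(N+1)^2\big(2\pi^2(N+1)^2-2-\pi^2\big)+4+36\pi^2+9\pi^4}+3\pi^2(N+1)^2-\frac34(2+\pi^2).\]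
   Context: $\mathrm{sinc}(x)=\frac{\sin(\pi x)}{\pi x}$ for $x\neq0$ and $\mathrm{sinc}(0)=1$. The incomplete Lambda function is $\lambda(s;a)=\sum_{n=1}^\infty \frac{1}{(2(n+a)-1)^s}$ for $s>1$, $a\ge 0$. *)

theory Defs
  imports "HOL-Analysis.Analysis"
begin

definition nsinc :: "real \<Rightarrow> real" where
  "nsinc x = (if x = 0 then 1 else sin (pi * x) / (pi * x))"

definition incLambda :: "real \<Rightarrow> real \<Rightarrow> real" where
  "incLambda s a = (\<Sum>n. 1 / (2 * (real (Suc n) + a) - 1) powr s)"

definition hfun :: "real \<Rightarrow> nat \<Rightarrow> real \<Rightarrow> real" where
  "hfun p N x = infsum (\<lambda>n::int. \<bar>nsinc (x - of_int n)\<bar> powr p)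
                   {n::int. \<bar>x - of_int n\<bar> > real N}"

definition local_min_point :: "(real \<Rightarrow> real) \<Rightarrow> real \<Rightarrow> bool" where
  "local_min_point f x0 \<longleftrightarrow> (\<forall>\<^sub>F y in at x0. f x0 \<le> f y)"

definition local_max_point :: "(real \<Rightarrow> real) \<Rightarrow> real \<Rightarrow> bool" where
  "local_max_point f x0 \<longleftrightarrow> (\<forall>\<^sub>F y in at x0. f y \<le> f x0)"

end

theory Submission
  imports Defs "HOL-Real_Asymp.Real_Asymp"
begin

text \<open>
  For \<open>\<bar>t\<bar> < 1/2\<close> every term of \<open>hfun p N (1/2 + t)\<close> has numerator \<open>cos (pi * t) powr p\<close>, and the
  indices split into \<open>n > N\<close> and \<open>n \<le> -N\<close>; hence \<open>hfun p N (1/2 + t)\<close> equals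
  \<open>pi powr (-p) * cos (pi * t) powr p * (\<zeta>(p, a - t) + \<zeta>(p, a + t))\<close> with the Hurwitz zeta
  function \<open>\<zeta>\<close> and \<open>a = N + 1/2\<close>. Expanding both factors to second order in \<open>t\<close> gives
  \<open>hfun p N (1/2 + t) - hfun p N (1/2) = p * pi powr (-p) * G(p) * t\<^sup>2 + o(t\<^sup>2)\<close> with
  \<open>G(p) = (p + 1) * \<zeta>(p + 2, a) - pi\<^sup>2 * \<zeta>(p, a)\<close> (\<open>curv_coeff a p\<close> below); since
  \<open>\<lambda>(s; N) = 2 powr (-s) * \<zeta>(s, a)\<close>, the equation for \<open>p\<^sub>*\<close> reads \<open>G(p\<^sub>*) = 0\<close>.

  \<open>G\<close> is negative for \<open>p + 1 < pi\<^sup>2 * a\<^sup>2\<close> and nonnegative at \<open>p = 2 * pi\<^sup>2 * a\<^sup>2 - 1\<close>, so it has a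
  root \<open>p\<^sub>*\<close> in between. This root is the only sign change: subtracting a suitable multiple of the
  vanishing series for \<open>G(p\<^sub>*)\<close> from the series for \<open>G(p)\<close> leaves terms that all have the sign of
  \<open>p - p\<^sub>*\<close>. The bounds on \<open>p\<^sub>*\<close> in the theorem are coarser than this bracket.
\<close>

section \<open>The Hurwitz zeta function\<close>

definition hurwitz_zeta :: "real \<Rightarrow> real \<Rightarrow> real" where
  "hurwitz_zeta s a = (\<Sum>j. (a + real j) powr (-s))"

lemma summable_hurwitz_zeta:
  assumes "0 < a" "1 < s"
  shows "summable (\<lambda>j. (a + real j) powr (-s))"
proof (rule summable_comparison_test)
  show "summable (\<lambda>j. real j powr (-s))"
    using summable_real_powr_iff[of "-s"] assms by simp
  show "\<exists>M. \<forall>j\<ge>M. norm ((a + real j) powr (-s)) \<le> real j powr (-s)"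
    using assms by (intro exI[of _ 1] allI impI) (auto intro!: powr_mono2')
qed

lemma hurwitz_zeta_sums:
  "0 < a \<Longrightarrow> 1 < s \<Longrightarrow> (\<lambda>j. (a + real j) powr (-s)) sums hurwitz_zeta s a"
  unfolding hurwitz_zeta_def by (rule summable_sums[OF summable_hurwitz_zeta])

lemma hurwitz_zeta_pos: "0 < a \<Longrightarrow> 1 < s \<Longrightarrow> 0 < hurwitz_zeta s a"
  unfolding hurwitz_zeta_def by (rule suminf_pos[OF summable_hurwitz_zeta]) auto

lemma incLambda_eq_hurwitz_zeta:
  assumes "0 \<le> a" "1 < s"
  shows "incLambda s a = 2 powr (-s) * hurwitz_zeta s (a + 1/2)"
proof -
  have term_eq: "1 / (2 * (real (Suc j) + a) - 1) powr s = 2 powr (-s) * (a + 1/2 + real j) powr (-s)"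
    for j
  proof -
    have "2 * (real (Suc j) + a) - 1 = 2 * (a + 1/2 + real j)" by simp
    then have "1 / (2 * (real (Suc j) + a) - 1) powr s = 1 / (2 powr s * (a + 1/2 + real j) powr s)"
      by (simp only: powr_mult)
    then show ?thesis
      by (simp add: powr_minus_divide)
  qed
  have "incLambda s a = (\<Sum>j. 2 powr (-s) * (a + 1/2 + real j) powr (-s))"
    unfolding incLambda_def by (simp only: term_eq)
  also have "\<dots> = 2 powr (-s) * hurwitz_zeta s (a + 1/2)"
    unfolding hurwitz_zeta_def using assms by (intro suminf_mult summable_hurwitz_zeta) auto
  finally show ?thesis .
qed

lemma hurwitz_zeta_continuous_on:
  assumes "1 \<le> a" "1 < s0"
  shows "continuous_on {s0..} (\<lambda>s. hurwitz_zeta s a)"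
proof -
  have "uniform_limit {s0..} (\<lambda>n s. \<Sum>j<n. (a + real j) powr (-s))
      (\<lambda>s. hurwitz_zeta s a) sequentially"
    unfolding hurwitz_zeta_def
  proof (rule Weierstrass_m_test)
    show "norm ((a + real j) powr (-s)) \<le> (a + real j) powr (-s0)" if "s \<in> {s0..}" for j s
      using assms that by (auto intro!: powr_mono)
    show "summable (\<lambda>j. (a + real j) powr (-s0))"
      using assms by (intro summable_hurwitz_zeta) auto
  qed
  then show ?thesis
    by (rule uniform_limit_theorem[rotated])
      (use assms in \<open>auto intro!: always_eventually continuous_intros\<close>)
qed

lemma powr_minus_plus_two: "0 < x \<Longrightarrow> x powr (-(s + 2)) = x powr (-s) / x\<^sup>2"
  for x s :: real
  by (simp add: powr_diff[of x "-s" 2, simplified] powr_realpow)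

section \<open>The second-order coefficient and its root\<close>

definition curv_coeff :: "real \<Rightarrow> real \<Rightarrow> real" where
  "curv_coeff a p = (p + 1) * hurwitz_zeta (p + 2) a - pi\<^sup>2 * hurwitz_zeta p a"

lemma curv_coeff_sums:
  assumes "0 < a" "1 < p"
  shows "(\<lambda>j. (p + 1) * (a + real j) powr (-(p + 2)) - pi\<^sup>2 * (a + real j) powr (-p))
           sums curv_coeff a p"
  unfolding curv_coeff_def using assms by (intro sums_diff sums_mult hurwitz_zeta_sums) auto

lemma powr_neg_diff_mult_sq_diff_nonneg:
  fixes u w d :: real
  assumes "0 < u" "0 < w"
  shows "0 \<le> d * ((u powr (-d) - w powr (-d)) * (w\<^sup>2 - u\<^sup>2))"
proof -
  have sq: "0 \<le> w\<^sup>2 - u\<^sup>2 \<longleftrightarrow> u \<le> w"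
    using assms by (simp add: power_mono_iff)
  consider "u \<le> w" "0 \<le> d" | "u \<le> w" "d < 0" | "w < u" "0 \<le> d" | "w < u" "d < 0"
    by linarith
  then show ?thesis
  proof cases
    case 1
    then have "w powr (-d) \<le> u powr (-d)" using assms by (intro powr_mono2') auto
    then show ?thesis using 1 sq by simp
  next
    case 2
    then have "u powr (-d) \<le> w powr (-d)" using assms by (intro powr_mono2) auto
    then show ?thesis using 2 sq by (simp add: mult_nonpos_nonneg mult_nonpos_nonpos)
  next
    case 3
    then have "u powr (-d) \<le> w powr (-d)" using assms by (intro powr_mono2') auto
    then show ?thesis using 3 sq by (simp add: mult_nonpos_nonpos)
  next
    case 4
    then have "w powr (-d) \<le> u powr (-d)" using assms by (intro powr_mono2) auto
    then show ?thesis using 4 sq by (simp add: mult_nonpos_nonpos mult_nonneg_nonpos)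
  qed
qed

text \<open>
  With \<open>d = p - p0\<close> and \<open>w = sqrt (p0 + 1) / pi\<close>, the \<open>j\<close>-th term of
  \<open>curv_coeff a p - w powr (-d) * curv_coeff a p0 - d * hurwitz_zeta (p + 2) a\<close> factors as
  \<open>pi\<^sup>2 * u powr (-p0) / u\<^sup>2 * (u powr (-d) - w powr (-d)) * (w\<^sup>2 - u\<^sup>2)\<close> with \<open>u = a + j\<close>,
  and both differences change sign at \<open>u = w\<close>.
\<close>

lemma curv_coeff_sign:
  assumes a: "0 < a" and p0: "1 < p0" "curv_coeff a p0 = 0" and p: "1 < p" "p \<noteq> p0"
  shows "0 < (p - p0) * curv_coeff a p"
proof -
  define d where "d = p - p0"
  define w where "w = sqrt (p0 + 1) / pi"
  define c where "c = w powr (-d)"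
  define Y where "Y j = pi\<^sup>2 * (a + real j) powr (-p0) / (a + real j)\<^sup>2
      * (((a + real j) powr (-d) - c) * (w\<^sup>2 - (a + real j)\<^sup>2))" for j
  have w: "0 < w" "w\<^sup>2 = (p0 + 1) / pi\<^sup>2"
    using p0 by (auto simp: w_def power_divide)
  have Y_eq: "Y j = ((p + 1) * u powr (-(p + 2)) - pi\<^sup>2 * u powr (-p))
      - c * ((p0 + 1) * u powr (-(p0 + 2)) - pi\<^sup>2 * u powr (-p0)) - d * u powr (-(p + 2))"
    if u: "u = a + real j" for u j
  proof -
    have "0 < u" using a u by simp
    have "p = p0 + d" by (simp add: d_def)
    then have "u powr (-p) = u powr (-p0) * u powr (-d)"
      by (simp add: powr_add[symmetric])
    then show ?thesis
      using \<open>0 < u\<close> \<open>p = p0 + d\<close>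
      unfolding Y_def u[symmetric] powr_minus_plus_two[OF \<open>0 < u\<close>] w(2)
      by (simp add: field_simps power2_eq_square)
  qed
  have "Y sums (curv_coeff a p - c * curv_coeff a p0 - d * hurwitz_zeta (p + 2) a)"
    unfolding Y_eq[OF refl]
    using a p p0 by (intro sums_diff sums_mult curv_coeff_sums hurwitz_zeta_sums) auto
  then have Y_sums: "Y sums (curv_coeff a p - d * hurwitz_zeta (p + 2) a)"
    using p0 by simp
  have "0 \<le> d * Y j" for j
    using powr_neg_diff_mult_sq_diff_nonneg[of "a + real j" w d] a w(1)
    by (simp add: Y_def c_def mult.left_commute[of d])
  then have "0 \<le> d * (curv_coeff a p - d * hurwitz_zeta (p + 2) a)"
    using sums_le[OF _ sums_zero sums_mult[OF Y_sums, of d]] by simp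
  moreover have "0 < d * d"
    using p(2) by (cases "p < p0") (auto simp: d_def zero_less_mult_iff)
  then have "0 < d * (d * hurwitz_zeta (p + 2) a)"
    using mult_pos_pos[OF _ hurwitz_zeta_pos[of a "p + 2"]] a p by (simp add: mult.assoc[symmetric])
  ultimately show ?thesis
    unfolding d_def[symmetric] by (simp add: algebra_simps)
qed

lemma curv_coeff_continuous_on:
  assumes "1 \<le> a" "1 < q"
  shows "continuous_on {q..} (curv_coeff a)"
proof -
  have "continuous_on {q..} (\<lambda>p. hurwitz_zeta (p + 2) a)"
    using assms by (intro continuous_on_compose2[OF hurwitz_zeta_continuous_on[of a q]]
        continuous_intros) auto
  then show ?thesis
    unfolding curv_coeff_def[abs_def]
    using assms by (intro continuous_intros hurwitz_zeta_continuous_on) auto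
qed

lemma hurwitz_zeta_plus_two_le:
  assumes "0 < a" "1 < s"
  shows "hurwitz_zeta (s + 2) a \<le> hurwitz_zeta s a / a\<^sup>2"
proof -
  have "(a + real j) powr (-(s + 2)) \<le> (a + real j) powr (-s) / a\<^sup>2" for j
  proof -
    have "(a + real j) powr (-(s + 2)) = (a + real j) powr (-s) / (a + real j)\<^sup>2"
      using assms by (intro powr_minus_plus_two) simp
    also have "\<dots> \<le> (a + real j) powr (-s) / a\<^sup>2"
      using assms by (intro divide_left_mono power_mono) auto
    finally show ?thesis .
  qed
  then have "hurwitz_zeta (s + 2) a \<le> (\<Sum>j. (a + real j) powr (-s) / a\<^sup>2)"
    unfolding hurwitz_zeta_def
    using assms by (intro suminf_le summable_divide summable_hurwitz_zeta) auto
  also have "\<dots> = hurwitz_zeta s a / a\<^sup>2"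
    unfolding hurwitz_zeta_def using assms by (intro suminf_divide summable_hurwitz_zeta) auto
  finally show ?thesis .
qed

lemma curv_coeff_neg:
  assumes "0 < a" "1 < p" "p + 1 < pi\<^sup>2 * a\<^sup>2"
  shows "curv_coeff a p < 0"
proof -
  have "curv_coeff a p \<le> (p + 1) * (hurwitz_zeta p a / a\<^sup>2) - pi\<^sup>2 * hurwitz_zeta p a"
    unfolding curv_coeff_def
    using assms hurwitz_zeta_plus_two_le[of a p] by (intro diff_right_mono mult_left_mono) auto
  also have "\<dots> = hurwitz_zeta p a * ((p + 1) - pi\<^sup>2 * a\<^sup>2) / a\<^sup>2"
    using assms by (simp add: field_simps)
  also have "\<dots> < 0"
    using assms hurwitz_zeta_pos[of a p] by (intro divide_neg_pos mult_pos_neg) auto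
  finally show ?thesis .
qed

lemma hurwitz_zeta_shift:
  assumes "0 < a" "1 < s"
  shows "hurwitz_zeta s a = a powr (-s) + hurwitz_zeta s (a + 1)"
  using suminf_split_head[OF summable_hurwitz_zeta[OF assms]]
  unfolding hurwitz_zeta_def by (simp add: add_ac)

lemma le_one_plus_inverse_powr:
  fixes a e :: real
  assumes "1 \<le> a" "a\<^sup>2 - 1 \<le> e"
  shows "a \<le> (1 + 1 / a) powr e"
proof -
  have e: "0 \<le> e" using assms one_le_power[of a 2] by linarith
  have pos: "0 < 1 + 1 / a" using assms by (intro add_pos_nonneg) auto
  have "1 / (a + 1) \<le> ln (1 + 1 / a)"
    using ln_le_minus_one[of "a / (a + 1)"] assms
    by (simp add: ln_div field_simps)
  have "a \<le> 1 + e / (a + 1)"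
    using assms by (simp add: field_simps power2_eq_square)
  also have "\<dots> \<le> 1 + e * ln (1 + 1 / a)"
    using \<open>1 / (a + 1) \<le> ln (1 + 1 / a)\<close> e by (simp add: divide_inverse mult_left_mono)
  also have "\<dots> \<le> exp (e * ln (1 + 1 / a))" by (rule exp_ge_add_one_self)
  also have "\<dots> = (1 + 1 / a) powr e"
    using pos by (simp add: powr_def mult.commute)
  finally show ?thesis .
qed

lemma hurwitz_zeta_succ_le:
  assumes a: "1 \<le> a" and s: "a\<^sup>2 + 1 \<le> s"
  shows "hurwitz_zeta s (a + 1) \<le> a powr (-s)"
proof -
  define e where "e = s - 2"
  define c where "c = (a + 1) powr (-e)"
  have e: "a\<^sup>2 - 1 \<le> e" "0 \<le> e"
    using a s one_le_power[of a 2] unfolding e_def by linarith+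
  have term_le: "(a + 1 + real j) powr (-s) \<le> c * (1 / (a + real j) - 1 / (a + real (Suc j)))"
    for j
  proof -
    have "(a + 1 + real j) powr (-s) = (a + 1 + real j) powr (-e) / (a + 1 + real j)\<^sup>2"
      using a powr_minus_plus_two[of "a + 1 + real j" e] by (simp add: e_def)
    also have "\<dots> \<le> c / (a + 1 + real j)\<^sup>2"
      unfolding c_def using a e by (intro divide_right_mono powr_mono2') auto
    also have "\<dots> \<le> c / ((a + real j) * (a + 1 + real j))"
      unfolding c_def using a by (intro divide_left_mono) (auto simp: power2_eq_square)
    also have "\<dots> = c * (1 / (a + real j) - 1 / (a + real (Suc j)))"
      using a by (simp add: field_simps)
    finally show ?thesis .
  qed
  have "(\<lambda>j. 1 / (a + real j)) \<longlonglongrightarrow> 0"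
    by real_asymp
  then have "(\<lambda>j. c * (1 / (a + real j) - 1 / (a + real (Suc j)))) sums (c * (1 / a))"
    using sums_mult[OF telescope_sums'] by fastforce
  then have "hurwitz_zeta s (a + 1) \<le> c / a"
    unfolding hurwitz_zeta_def using term_le summable_hurwitz_zeta[of "a + 1" s] a e
    unfolding e_def by (intro sums_le[OF _ summable_sums]) (auto simp: add_ac)
  also have "\<dots> \<le> a powr (-e) / a\<^sup>2"
  proof -
    have "a + 1 = (1 + 1 / a) * a"
      using a by (simp add: field_simps)
    then have "(a + 1) powr e = (1 + 1 / a) powr e * a powr e"
      by (metis powr_mult)
    then have "a * a powr e \<le> (a + 1) powr e"
      using le_one_plus_inverse_powr[OF a e(1)] by (simp add: mult_right_mono)
    then show ?thesis
      unfolding c_def using a by (simp add: powr_minus field_simps power2_eq_square)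
  qed
  also have "\<dots> = a powr (-s)"
    using a powr_minus_plus_two[of a e] by (simp add: e_def)
  finally show ?thesis .
qed

lemma pi_sq_gt_9: "9 < pi\<^sup>2"
  using power_strict_mono[OF pi_gt3, of 2] by simp

lemma curv_coeff_nonneg:
  assumes a: "1 \<le> a"
  shows "0 \<le> curv_coeff a (2 * pi\<^sup>2 * a\<^sup>2 - 1)"
proof -
  define p where "p = 2 * pi\<^sup>2 * a\<^sup>2 - 1"
  have "1 \<le> a\<^sup>2" "9 * a\<^sup>2 \<le> pi\<^sup>2 * a\<^sup>2"
    using a pi_sq_gt_9 by (auto simp: one_le_power intro: mult_right_mono)
  then have p: "a\<^sup>2 + 1 \<le> p" "1 < p"
    unfolding p_def by linarith+
  have "2 * pi\<^sup>2 * a powr (-p) = (p + 1) * a powr (-(p + 2))"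
    using a powr_minus_plus_two[of a p] by (simp add: p_def)
  also have "\<dots> \<le> (p + 1) * hurwitz_zeta (p + 2) a"
    using a p hurwitz_zeta_shift[of a "p + 2"] hurwitz_zeta_pos[of "a + 1" "p + 2"] by simp
  finally have "2 * pi\<^sup>2 * a powr (-p) \<le> (p + 1) * hurwitz_zeta (p + 2) a" .
  moreover have "pi\<^sup>2 * hurwitz_zeta p a \<le> 2 * pi\<^sup>2 * a powr (-p)"
    using a p hurwitz_zeta_shift[of a p] hurwitz_zeta_succ_le[of a p] by simp
  ultimately show ?thesis
    unfolding curv_coeff_def p_def[symmetric] by linarith
qed

lemma curv_coeff_root_exists:
  assumes a: "1 \<le> a" and q: "1 < q" "q + 1 < pi\<^sup>2 * a\<^sup>2"
  shows "\<exists>ps. q \<le> ps \<and> ps \<le> 2 * pi\<^sup>2 * a\<^sup>2 - 1 \<and> curv_coeff a ps = 0"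
proof (rule IVT')
  show "curv_coeff a q \<le> 0" "0 \<le> curv_coeff a (2 * pi\<^sup>2 * a\<^sup>2 - 1)"
    using curv_coeff_neg[of a q] curv_coeff_nonneg[OF a] a q by auto
  show "q \<le> 2 * pi\<^sup>2 * a\<^sup>2 - 1"
    using q by linarith
  show "continuous_on {q..2 * pi\<^sup>2 * a\<^sup>2 - 1} (curv_coeff a)"
    using curv_coeff_continuous_on[OF a q(1)] by (rule continuous_on_subset) auto
qed

section \<open>Second-order behaviour of \<open>hfun\<close> at \<open>1/2\<close>\<close>

lemma powr_pair_maclaurin:
  fixes u t p :: real
  assumes t: "\<bar>t\<bar> < u"
  shows "\<exists>\<xi>. \<bar>\<xi>\<bar> \<le> \<bar>t\<bar> \<and> (u - t) powr (-p) + (u + t) powr (-p) =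
     2 * u powr (-p) + p * (p + 1) * u powr (-p - 2) * t\<^sup>2
     + p * (p + 1) * (p + 2) * (p + 3) * ((u - \<xi>) powr (-p - 4) + (u + \<xi>) powr (-p - 4)) / 24 * t ^ 4"
proof -
  \<comment> \<open>the \<open>m\<close>-th derivative of \<open>\<lambda>\<tau>. (u - \<tau>) powr (-p) + (u + \<tau>) powr (-p)\<close>\<close>
  define D where "D m \<tau> = pochhammer p m *
      ((u - \<tau>) powr (-p - real m) + (-1) ^ m * (u + \<tau>) powr (-p - real m))" for m :: nat and \<tau>
  have "DERIV (D m) \<tau> :> D (Suc m) \<tau>" if "\<bar>\<tau>\<bar> \<le> \<bar>t\<bar>" for m \<tau>
  proof -
    have "0 < u - \<tau>" "0 < u + \<tau>" using that t by auto
    then show ?thesis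
      unfolding D_def
      by (auto intro!: derivative_eq_intros simp: pochhammer_rec' algebra_simps diff_diff_eq)
  qed
  then obtain \<xi> where "\<bar>\<xi>\<bar> \<le> \<bar>t\<bar>"
      "D 0 t = (\<Sum>m<4. D m 0 / fact m * t ^ m) + D 4 \<xi> / fact 4 * t ^ 4"
    using Maclaurin_bi_le[of D "D 0" 4 t] by blast
  then show ?thesis
    by (intro exI[of _ \<xi>]) (simp add: D_def eval_nat_numeral pochhammer_rec' field_simps)
qed

lemma powr_pair_bounds:
  fixes u t p :: real
  assumes u: "3/2 \<le> u" and t: "\<bar>t\<bar> \<le> 1/2" and p: "0 \<le> p"
  shows "2 * u powr (-p) + p * (p + 1) * u powr (-p - 2) * t\<^sup>2
           \<le> (u - t) powr (-p) + (u + t) powr (-p)"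
    and "(u - t) powr (-p) + (u + t) powr (-p) \<le> 2 * u powr (-p) + p * (p + 1) * u powr (-p - 2) * t\<^sup>2
           + p * (p + 1) * (p + 2) * (p + 3) / 12 * (u - 1/2) powr (-p) * t ^ 4"
proof -
  define P where "P = p * (p + 1) * (p + 2) * (p + 3)"
  obtain \<xi> where \<xi>: "\<bar>\<xi>\<bar> \<le> \<bar>t\<bar>" and eq: "(u - t) powr (-p) + (u + t) powr (-p) =
      2 * u powr (-p) + p * (p + 1) * u powr (-p - 2) * t\<^sup>2
      + P * ((u - \<xi>) powr (-p - 4) + (u + \<xi>) powr (-p - 4)) / 24 * t ^ 4"
    using powr_pair_maclaurin[of t u p] u t unfolding P_def by auto
  have le: "v powr (-p - 4) \<le> (u - 1/2) powr (-p)" if "u - 1/2 \<le> v" for v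
  proof -
    have "v powr (-p - 4) \<le> (u - 1/2) powr (-p - 4)"
      using that u p by (intro powr_mono2') auto
    also have "\<dots> \<le> (u - 1/2) powr (-p)"
      using u by (intro powr_mono) auto
    finally show ?thesis .
  qed
  have "(u - \<xi>) powr (-p - 4) + (u + \<xi>) powr (-p - 4) \<le> 2 * (u - 1/2) powr (-p)"
    using le[of "u - \<xi>"] le[of "u + \<xi>"] \<xi> t by linarith
  then have "P * ((u - \<xi>) powr (-p - 4) + (u + \<xi>) powr (-p - 4)) / 24 * t ^ 4
      \<le> P * (2 * (u - 1/2) powr (-p)) / 24 * t ^ 4"
    using p by (intro mult_right_mono divide_right_mono mult_left_mono) (auto simp: P_def)
  moreover have "0 \<le> P * ((u - \<xi>) powr (-p - 4) + (u + \<xi>) powr (-p - 4)) / 24 * t ^ 4"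
    using p by (simp add: P_def)
  ultimately show "2 * u powr (-p) + p * (p + 1) * u powr (-p - 2) * t\<^sup>2
      \<le> (u - t) powr (-p) + (u + t) powr (-p)"
    and "(u - t) powr (-p) + (u + t) powr (-p) \<le> 2 * u powr (-p) + p * (p + 1) * u powr (-p - 2) * t\<^sup>2
      + p * (p + 1) * (p + 2) * (p + 3) / 12 * (u - 1/2) powr (-p) * t ^ 4"
    unfolding eq by (simp_all add: P_def)
qed

lemma hurwitz_zeta_pair_bounds:
  assumes a: "3/2 \<le> a" and t: "\<bar>t\<bar> \<le> 1/2" and p: "1 < p"
  shows "2 * hurwitz_zeta p a + p * (p + 1) * hurwitz_zeta (p + 2) a * t\<^sup>2
           \<le> hurwitz_zeta p (a - t) + hurwitz_zeta p (a + t)"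
    and "hurwitz_zeta p (a - t) + hurwitz_zeta p (a + t) \<le> 2 * hurwitz_zeta p a
           + p * (p + 1) * hurwitz_zeta (p + 2) a * t\<^sup>2
           + p * (p + 1) * (p + 2) * (p + 3) / 12 * hurwitz_zeta p (a - 1/2) * t ^ 4"
proof -
  have pair: "(\<lambda>j. (a + real j - t) powr (-p) + (a + real j + t) powr (-p))
      sums (hurwitz_zeta p (a - t) + hurwitz_zeta p (a + t))"
    using hurwitz_zeta_sums[of "a - t" p] hurwitz_zeta_sums[of "a + t" p] a t p
    by (intro sums_add) (auto simp: algebra_simps)
  have lower: "(\<lambda>j. 2 * (a + real j) powr (-p) + p * (p + 1) * (a + real j) powr (-p - 2) * t\<^sup>2)
      sums (2 * hurwitz_zeta p a + p * (p + 1) * hurwitz_zeta (p + 2) a * t\<^sup>2)"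
    using hurwitz_zeta_sums[of a p] hurwitz_zeta_sums[of a "p + 2"] a p
    by (intro sums_add sums_mult sums_mult2) auto
  have upper: "(\<lambda>j. 2 * (a + real j) powr (-p) + p * (p + 1) * (a + real j) powr (-p - 2) * t\<^sup>2
      + p * (p + 1) * (p + 2) * (p + 3) / 12 * (a + real j - 1/2) powr (-p) * t ^ 4)
      sums (2 * hurwitz_zeta p a + p * (p + 1) * hurwitz_zeta (p + 2) a * t\<^sup>2
      + p * (p + 1) * (p + 2) * (p + 3) / 12 * hurwitz_zeta p (a - 1/2) * t ^ 4)"
  proof (rule sums_add[OF lower])
    have "(\<lambda>j. (a + real j - 1/2) powr (-p)) sums hurwitz_zeta p (a - 1/2)"
      using hurwitz_zeta_sums[of "a - 1/2" p] a p by (simp add: algebra_simps)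
    then show "(\<lambda>j. p * (p + 1) * (p + 2) * (p + 3) / 12 * (a + real j - 1/2) powr (-p) * t ^ 4)
        sums (p * (p + 1) * (p + 2) * (p + 3) / 12 * hurwitz_zeta p (a - 1/2) * t ^ 4)"
      by (intro sums_mult sums_mult2)
  qed
  show "2 * hurwitz_zeta p a + p * (p + 1) * hurwitz_zeta (p + 2) a * t\<^sup>2
      \<le> hurwitz_zeta p (a - t) + hurwitz_zeta p (a + t)"
    using a t p by (intro sums_le[OF _ lower pair] powr_pair_bounds(1)) auto
  show "hurwitz_zeta p (a - t) + hurwitz_zeta p (a + t) \<le> 2 * hurwitz_zeta p a
      + p * (p + 1) * hurwitz_zeta (p + 2) a * t\<^sup>2
      + p * (p + 1) * (p + 2) * (p + 3) / 12 * hurwitz_zeta p (a - 1/2) * t ^ 4"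
    using a t p by (intro sums_le[OF _ pair upper] powr_pair_bounds(2)) auto
qed

lemma hurwitz_zeta_pair_second_difference:
  assumes a: "3/2 \<le> a" and p: "1 < p"
  shows "((\<lambda>t. (hurwitz_zeta p (a - t) + hurwitz_zeta p (a + t) - 2 * hurwitz_zeta p a) / t\<^sup>2)
           \<longlongrightarrow> p * (p + 1) * hurwitz_zeta (p + 2) a) (at 0)"
proof (rule tendsto_sandwich)
  define L where "L = p * (p + 1) * hurwitz_zeta (p + 2) a"
  define K where "K = p * (p + 1) * (p + 2) * (p + 3) / 12 * hurwitz_zeta p (a - 1/2)"
  have near: "\<forall>\<^sub>F t in at (0::real). t \<noteq> 0 \<and> \<bar>t\<bar> \<le> 1/2"
    unfolding eventually_at by (intro exI[of _ "1/2"]) auto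
  show "\<forall>\<^sub>F t in at 0. L \<le> (hurwitz_zeta p (a - t) + hurwitz_zeta p (a + t) - 2 * hurwitz_zeta p a) / t\<^sup>2"
    using near
  proof eventually_elim
    case (elim t)
    then show ?case
      using hurwitz_zeta_pair_bounds(1)[OF a _ p, of t] by (simp add: L_def pos_le_divide_eq)
  qed
  show "\<forall>\<^sub>F t in at 0. (hurwitz_zeta p (a - t) + hurwitz_zeta p (a + t) - 2 * hurwitz_zeta p a) / t\<^sup>2
      \<le> L + K * t\<^sup>2"
    using near
  proof eventually_elim
    case (elim t)
    have "t ^ 4 = t\<^sup>2 * t\<^sup>2" by algebra
    then show ?case
      using hurwitz_zeta_pair_bounds(2)[OF a _ p, of t] elim
      by (simp add: L_def K_def pos_divide_le_eq algebra_simps)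
  qed
  show "((\<lambda>t. L) \<longlongrightarrow> p * (p + 1) * hurwitz_zeta (p + 2) a) (at 0)"
    by (simp add: L_def)
  show "((\<lambda>t. L + K * t\<^sup>2) \<longlongrightarrow> p * (p + 1) * hurwitz_zeta (p + 2) a) (at 0)"
    by (auto simp: L_def intro!: tendsto_eq_intros)
qed

lemma abs_nsinc_half_shift:
  fixes t :: real and n :: int
  assumes "1/2 + t - of_int n \<noteq> 0"
  shows "\<bar>nsinc (1/2 + t - of_int n)\<bar> = \<bar>cos (pi * t)\<bar> / (pi * \<bar>1/2 + t - of_int n\<bar>)"
proof -
  have "sin (pi * (1/2 + t - of_int n)) = sin (pi/2 + pi * t) * cos (pi * of_int n)"
    using sin_diff[of "pi/2 + pi * t" "pi * of_int n"] by (simp add: algebra_simps)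
  then have "\<bar>sin (pi * (1/2 + t - of_int n))\<bar> = \<bar>cos (pi * t)\<bar>"
    by (simp add: sin_add abs_mult)
  then show ?thesis
    using assms by (simp add: nsinc_def abs_divide abs_mult)
qed

lemma cos_pi_pos:
  assumes "\<bar>t\<bar> < 1/2"
  shows "0 < cos (pi * t)"
proof (rule cos_gt_zero_pi)
  have t: "-1/2 < t" "t < 1/2"
    using assms by (simp_all add: abs_less_iff)
  show "-(pi/2) < pi * t" "pi * t < pi/2"
    using mult_strict_left_mono[OF t(1) pi_gt_zero] mult_strict_left_mono[OF t(2) pi_gt_zero]
    by simp_all
qed

lemma hfun_half_shift:
  assumes p: "1 < p" and t: "\<bar>t\<bar> < 1/2"
  shows "hfun p N (1/2 + t) = pi powr (-p) * cos (pi * t) powr p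
           * (hurwitz_zeta p (real N + 1/2 - t) + hurwitz_zeta p (real N + 1/2 + t))"
proof -
  define g where "g n = \<bar>nsinc (1/2 + t - of_int n)\<bar> powr p" for n :: int
  define K where "K = pi powr (-p) * cos (pi * t) powr p"
  define right where "right j = int N + 1 + int j" for j :: nat
  define left where "left j = - int N - int j" for j :: nat
  have g_eq: "g n = K * \<bar>1/2 + t - of_int n\<bar> powr (-p)" if "1/2 + t - of_int n \<noteq> 0" for n
  proof -
    define u where "u = \<bar>1/2 + t - of_int n\<bar>"
    have "0 < u" "0 < cos (pi * t)"
      using that cos_pi_pos[OF t] by (auto simp: u_def)
    have "g n = (cos (pi * t) / (pi * u)) powr p"
      unfolding g_def abs_nsinc_half_shift[OF that] u_def[symmetric]
      using \<open>0 < cos (pi * t)\<close> by (simp only: abs_of_pos)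
    also have "\<dots> = cos (pi * t) powr p / (pi powr p * u powr p)"
      using \<open>0 < u\<close> \<open>0 < cos (pi * t)\<close>
      by (simp only: powr_divide powr_mult less_imp_le pi_ge_zero mult_nonneg_nonneg)
    also have "\<dots> = K * u powr (-p)"
      unfolding K_def by (simp add: powr_minus_divide)
    finally show ?thesis unfolding u_def .
  qed
  have side: "(g has_sum K * hurwitz_zeta p b) (range h)"
    if "inj h" "0 < b" "\<And>j. g (h j) = K * (b + real j) powr (-p)" for h :: "nat \<Rightarrow> int" and b
  proof -
    have "g \<circ> h = (\<lambda>j. K * (b + real j) powr (-p))"
      using that(3) by (simp add: fun_eq_iff)
    moreover have "(\<lambda>j. K * (b + real j) powr (-p)) sums (K * hurwitz_zeta p b)"
      using that(2) p by (intro sums_mult hurwitz_zeta_sums)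
    ultimately have "((g \<circ> h) has_sum K * hurwitz_zeta p b) UNIV"
      by (intro sums_nonneg_imp_has_sum) (simp_all add: K_def)
    then show ?thesis
      by (simp add: has_sum_reindex[OF that(1)])
  qed
  have "{n. real N < \<bar>1/2 + t - of_int n\<bar>} = range right \<union> range left"
  proof (intro equalityI subsetI)
    fix n assume "n \<in> {n. real N < \<bar>1/2 + t - of_int n\<bar>}"
    then have "int N + 1 \<le> n \<or> n \<le> - int N"
      using t by (auto simp: abs_less_iff abs_if split: if_splits)
    then show "n \<in> range right \<union> range left"
    proof
      assume "int N + 1 \<le> n"
      then have "n = right (nat (n - int N - 1))" by (simp add: right_def)
      then show ?thesis by blast
    next
      assume "n \<le> - int N"
      then have "n = left (nat (- n - int N))" by (simp add: left_def)
      then show ?thesis by blast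
    qed
  qed (use t in \<open>auto simp: right_def left_def\<close>)
  moreover have "(g has_sum K * hurwitz_zeta p (real N + 1/2 - t)) (range right)"
    using t by (intro side) (auto simp: inj_def right_def g_eq algebra_simps)
  moreover have "(g has_sum K * hurwitz_zeta p (real N + 1/2 + t)) (range left)"
    using t by (intro side) (auto simp: inj_def left_def g_eq algebra_simps)
  moreover have "range right \<inter> range left = {}"
    by (auto simp: right_def left_def)
  ultimately have "(g has_sum K * hurwitz_zeta p (real N + 1/2 - t) + K * hurwitz_zeta p (real N + 1/2 + t))
      {n. real N < \<bar>1/2 + t - of_int n\<bar>}"
    by (simp add: has_sum_Un_disjoint)
  then show ?thesis
    unfolding hfun_def g_def[symmetric] K_def by (simp add: infsumI algebra_simps)
qed

lemma hfun_second_difference: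
  assumes N: "1 \<le> N" and p: "1 < p"
  shows "((\<lambda>t. (hfun p N (1/2 + t) - hfun p N (1/2)) / t\<^sup>2)
           \<longlongrightarrow> p * pi powr (-p) * curv_coeff (real N + 1/2) p) (at 0)"
proof -
  define a where "a = real N + 1/2"
  define A where "A = hurwitz_zeta p a"
  define C where "C t = cos (pi * t) powr p" for t
  define Q where "Q t = (hurwitz_zeta p (a - t) + hurwitz_zeta p (a + t) - 2 * A) / t\<^sup>2" for t
  have "\<forall>\<^sub>F t in at (0::real). t \<noteq> 0 \<and> \<bar>t\<bar> < 1/2"
    unfolding eventually_at by (intro exI[of _ "1/2"]) auto
  then have eq: "\<forall>\<^sub>F t in at 0. (hfun p N (1/2 + t) - hfun p N (1/2)) / t\<^sup>2
      = pi powr (-p) * (C t * Q t + 2 * A * ((C t - 1) / t\<^sup>2))"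
  proof eventually_elim
    case (elim t)
    then show ?case
      using hfun_half_shift[OF p, of t N] hfun_half_shift[OF p, of 0 N]
      by (simp add: a_def A_def C_def Q_def field_simps)
  qed
  have lim: "((\<lambda>t. pi powr (-p) * (C t * Q t + 2 * A * ((C t - 1) / t\<^sup>2)))
      \<longlongrightarrow> pi powr (-p) * (1 * (p * (p + 1) * hurwitz_zeta (p + 2) a) + 2 * A * (- (pi * pi * p / 2)))) (at 0)"
  proof (intro tendsto_intros)
    show "(C \<longlongrightarrow> 1) (at 0)" "((\<lambda>t. (C t - 1) / t\<^sup>2) \<longlongrightarrow> - (pi * pi * p / 2)) (at 0)"
      unfolding C_def by real_asymp+
    show "(Q \<longlongrightarrow> p * (p + 1) * hurwitz_zeta (p + 2) a) (at 0)"
      unfolding Q_def A_def using N p by (intro hurwitz_zeta_pair_second_difference) (auto simp: a_def)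
  qed
  have val: "pi powr (-p) * (1 * (p * (p + 1) * hurwitz_zeta (p + 2) a) + 2 * A * (- (pi * pi * p / 2)))
      = p * pi powr (-p) * curv_coeff (real N + 1/2) p"
    by (simp add: A_def a_def curv_coeff_def power2_eq_square algebra_simps)
  show ?thesis
    unfolding tendsto_cong[OF eq] val[symmetric] by (rule lim)
qed

lemma local_min_point_of_second_difference:
  assumes "((\<lambda>t. (f (x + t) - f x) / t\<^sup>2) \<longlongrightarrow> L) (at 0)" "0 < L"
  shows "local_min_point f x"
proof -
  have "\<forall>\<^sub>F t in at 0. 0 < (f (x + t) - f x) / t\<^sup>2"
    using order_tendstoD(1)[OF assms] .
  then have "\<forall>\<^sub>F t in at 0. f x \<le> f (t + x)"
    by eventually_elim (simp add: zero_less_divide_iff add.commute)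
  then show ?thesis
    unfolding local_min_point_def at_to_0[of x] eventually_filtermap .
qed

lemma local_max_point_of_second_difference:
  assumes "((\<lambda>t. (f (x + t) - f x) / t\<^sup>2) \<longlongrightarrow> L) (at 0)" "L < 0"
  shows "local_max_point f x"
proof -
  have "((\<lambda>t. ((- f) (x + t) - (- f) x) / t\<^sup>2) \<longlongrightarrow> - L) (at 0)"
    using tendsto_minus[OF assms(1)] by (simp add: minus_divide_left)
  then have "local_min_point (- f) x"
    using assms(2) by (intro local_min_point_of_second_difference) auto
  then show ?thesis
    by (simp add: local_min_point_def local_max_point_def)
qed

lemma hfun_local_min_point:
  assumes "1 \<le> N" "1 < p" "0 < curv_coeff (real N + 1/2) p"
  shows "local_min_point (hfun p N) (1/2)"
  using assms by (intro local_min_point_of_second_difference[OF hfun_second_difference]) auto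

lemma hfun_local_max_point:
  assumes "1 \<le> N" "1 < p" "curv_coeff (real N + 1/2) p < 0"
  shows "local_max_point (hfun p N) (1/2)"
  using assms by (intro local_max_point_of_second_difference[OF hfun_second_difference])
    (auto simp: mult_pos_neg)

section \<open>The critical exponent\<close>

lemma incLambda_combination_eq_curv_coeff:
  assumes "0 \<le> a" "1 < p"
  shows "4 * (p + 1) * incLambda (p + 2) a - pi\<^sup>2 * incLambda p a
           = 2 powr (-p) * curv_coeff (a + 1/2) p"
proof -
  have two: "2 powr (-p - 2) = 2 powr (-p) / 4"
    using powr_minus_plus_two[of 2 p] by simp
  show ?thesis
    using assms by (simp add: incLambda_eq_hurwitz_zeta curv_coeff_def two algebra_simps)
qed

lemma lower_estimate_bounds:
  fixes N :: nat
  assumes "1 \<le> N"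
  defines "X \<equiv> pi\<^sup>2 * (2 * real N + 1)\<^sup>2 - 12"
  shows "1 < (1/8) * (X + sqrt (X\<^sup>2 - 128))"
    and "(1/8) * (X + sqrt (X\<^sup>2 - 128)) + 1 < pi\<^sup>2 * (real N + 1/2)\<^sup>2"
proof -
  have "9 \<le> (2 * real N + 1)\<^sup>2"
    using assms power_mono[of 3 "2 * real N + 1" 2] by simp
  then have "9 * 9 \<le> pi\<^sup>2 * (2 * real N + 1)\<^sup>2"
    using pi_sq_gt_9 by (intro mult_mono) auto
  then have X: "69 \<le> X" by (simp add: X_def)
  then have "0 \<le> sqrt (X\<^sup>2 - 128)" and sqrt_le: "sqrt (X\<^sup>2 - 128) \<le> X"
    using power_mono[OF X, of 2] by (auto simp: real_sqrt_le_iff' intro!: real_le_lsqrt)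
  moreover have center: "pi\<^sup>2 * (real N + 1/2)\<^sup>2 = (X + 12) / 4"
    by (simp add: X_def power2_eq_square algebra_simps)
  ultimately show "1 < (1/8) * (X + sqrt (X\<^sup>2 - 128))"
    using X by argo
  show "(1/8) * (X + sqrt (X\<^sup>2 - 128)) + 1 < pi\<^sup>2 * (real N + 1/2)\<^sup>2"
    using sqrt_le center X by argo
qed

lemma upper_estimate_bound:
  fixes N :: nat
  assumes "1 \<le> N"
  shows "2 * pi\<^sup>2 * (real N + 1/2)\<^sup>2 - 1 \<le> (1/4) * sqrt (72 * pi\<^sup>2 * (real N + 1)\<^sup>2
           * (2 * pi\<^sup>2 * (real N + 1)\<^sup>2 - 2 - pi\<^sup>2) + 4 + 36 * pi\<^sup>2 + 9 * pi ^ 4)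
           + 3 * pi\<^sup>2 * (real N + 1)\<^sup>2 - (3/4) * (2 + pi\<^sup>2)"
proof -
  have M: "4 * pi\<^sup>2 \<le> pi\<^sup>2 * (real N + 1)\<^sup>2" "pi\<^sup>2 * (real N + 1/2)\<^sup>2 \<le> pi\<^sup>2 * (real N + 1)\<^sup>2"
    using assms power_mono[of 2 "real N + 1" 2] by (auto intro!: mult_left_mono power_mono)
  have "0 \<le> 2 * pi\<^sup>2 * (real N + 1)\<^sup>2 - 2 - pi\<^sup>2"
    using M(1) pi_sq_gt_9 by linarith
  then have "0 \<le> sqrt (72 * pi\<^sup>2 * (real N + 1)\<^sup>2 * (2 * pi\<^sup>2 * (real N + 1)\<^sup>2 - 2 - pi\<^sup>2)
      + 4 + 36 * pi\<^sup>2 + 9 * pi ^ 4)"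
    by simp
  then show ?thesis
    using M pi_sq_gt_9 by argo
qed

theorem theorem3:
  fixes N :: nat
  assumes "N \<ge> 1"
  shows "\<exists>ps::real.
     (\<forall>p>1. p > ps \<longrightarrow> local_min_point (hfun p N) (1/2)) \<and>
     (\<forall>p>1. p < ps \<longrightarrow> local_max_point (hfun p N) (1/2)) \<and>
     4 * (ps + 1) * incLambda (ps + 2) (real N) - pi\<^sup>2 * incLambda ps (real N) = 0 \<and>
     ps \<ge> (1/8) * (pi\<^sup>2 * (2 * real N + 1)\<^sup>2 - 12
                    + sqrt ((pi\<^sup>2 * (2 * real N + 1)\<^sup>2 - 12)\<^sup>2 - 128)) \<and>
     ps \<le> (1/4) * sqrt (72 * pi\<^sup>2 * (real N + 1)\<^sup>2 * (2 * pi\<^sup>2 * (real N + 1)\<^sup>2 - 2 - pi\<^sup>2)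
                        + 4 + 36 * pi\<^sup>2 + 9 * pi ^ 4)
           + 3 * pi\<^sup>2 * (real N + 1)\<^sup>2 - (3/4) * (2 + pi\<^sup>2)"
proof -
  define a where "a = real N + 1/2"
  define L where "L = (1/8) * (pi\<^sup>2 * (2 * real N + 1)\<^sup>2 - 12
      + sqrt ((pi\<^sup>2 * (2 * real N + 1)\<^sup>2 - 12)\<^sup>2 - 128))"
  have L: "1 < L" "L + 1 < pi\<^sup>2 * a\<^sup>2"
    using lower_estimate_bounds[OF assms] by (simp_all add: L_def a_def)
  obtain ps where ps: "L \<le> ps" "ps \<le> 2 * pi\<^sup>2 * a\<^sup>2 - 1" "curv_coeff a ps = 0"
    using curv_coeff_root_exists[of a L] L assms by (auto simp: a_def)
  then have "1 < ps"
    using L by linarith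
  then have sign: "0 < (p - ps) * curv_coeff a p" if "1 < p" "p \<noteq> ps" for p
    using curv_coeff_sign[of a ps p] ps(3) that by (simp add: a_def)
  show ?thesis
  proof (intro exI[of _ ps] conjI allI impI)
    show "local_min_point (hfun p N) (1/2)" if "1 < p" "ps < p" for p
      using sign[of p] that assms
      by (intro hfun_local_min_point) (auto simp: a_def zero_less_mult_iff)
    show "local_max_point (hfun p N) (1/2)" if "1 < p" "p < ps" for p
      using sign[of p] that assms
      by (intro hfun_local_max_point) (auto simp: a_def zero_less_mult_iff)
    show "4 * (ps + 1) * incLambda (ps + 2) (real N) - pi\<^sup>2 * incLambda ps (real N) = 0"
      using incLambda_combination_eq_curv_coeff[of "real N" ps] \<open>1 < ps\<close> ps(3)
      by (simp add: a_def)
  qed (use ps upper_estimate_bound[OF assms] in \<open>auto simp: a_def L_def\<close>)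
qed

end
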